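(* Let $S\subset\mathbb{Z}_p$ be a set consisting of exactly $p$ points and let $\mu_S=\sum_{s\in S}\delta_s$, where $\delta_s$ is the Dirac measure at $s$. Then for $\xi\in\mathbb{Q}_p$, $\widehat{\mu_S}(\xi)=0$ if and only if $|(s-s')\xi|_p=p$ for all distinct $s,s'\in S$.
   Context: $\mathbb{Q}_p$ is the field of $p$-adic numbers ($p$ prime) with absolute value $|\cdot|_p$ and $\mathbb{Z}_p$ its ring of integers. For $x=\sum_{n\ge v}a_np^n$ ($a_n\in\{0,\dots,p-1\}$) its fractional part is $\{x\}=\sum_{n=v}^{-1}a_np^n$. Let $\chi(x)=e^{2\pi i\{x\}}$ and $\chi_y(x)=\chi(yx)$. The Fourier transform of a finite Borel measure $\mu$ on $\mathbb{Q}_p$ is $\widehat\mu(y)=\int_{\mathbb{Q}_p}\overline{\chi_y(x)}\,d\mu(x)$; in particular $\widehat{\mu_S}(\xi)=\sum_{s\in S}e^{-2\pi i\{s\xi\}}$. *)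

theory Defs
  imports "HOL-Analysis.Analysis" "HOL-Computational_Algebra.Primes"
begin

text \<open>p-adic integers as the inverse limit of Z/p^n Z: x n is the residue of x mod p^n
  (canonical representative in [0, p^n)), with compatible residues.\<close>
definition Zp :: "nat \<Rightarrow> (nat \<Rightarrow> int) set" where
  "Zp p = {x. \<forall>n. 0 \<le> x n \<and> x n < int p ^ n \<and> x (Suc n) mod int p ^ n = x n}"

definition zp_diff :: "nat \<Rightarrow> (nat \<Rightarrow> int) \<Rightarrow> (nat \<Rightarrow> int) \<Rightarrow> (nat \<Rightarrow> int)" where
  "zp_diff p x y = (\<lambda>n. (x n - y n) mod int p ^ n)"

definition zp_mult :: "nat \<Rightarrow> (nat \<Rightarrow> int) \<Rightarrow> (nat \<Rightarrow> int) \<Rightarrow> (nat \<Rightarrow> int)" where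
  "zp_mult p x y = (\<lambda>n. (x n * y n) mod int p ^ n)"

text \<open>p-adic numbers: a pair (k, z) with z in Zp represents p^(-k) * z.
  Every element of Q_p has such representations.\<close>
definition Qp :: "nat \<Rightarrow> (nat \<times> (nat \<Rightarrow> int)) set" where
  "Qp p = {(k, z). z \<in> Zp p}"

definition qp_scale :: "nat \<Rightarrow> (nat \<Rightarrow> int) \<Rightarrow> nat \<times> (nat \<Rightarrow> int) \<Rightarrow> nat \<times> (nat \<Rightarrow> int)" where
  "qp_scale p s xi = (fst xi, zp_mult p s (snd xi))"

text \<open>Fractional part: {p^(-k) z} = (z mod p^k) / p^k.\<close>
definition qp_frac :: "nat \<Rightarrow> nat \<times> (nat \<Rightarrow> int) \<Rightarrow> real" where
  "qp_frac p xi = real_of_int (snd xi (fst xi)) / real p ^ fst xi"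

text \<open>p-adic valuation of a nonzero p-adic integer: the largest n with p^n dividing z.\<close>
definition zp_val :: "nat \<Rightarrow> (nat \<Rightarrow> int) \<Rightarrow> nat" where
  "zp_val p z = (LEAST n. z (Suc n) \<noteq> 0)"

definition qp_abs :: "nat \<Rightarrow> nat \<times> (nat \<Rightarrow> int) \<Rightarrow> real" where
  "qp_abs p xi = (if (\<forall>n. snd xi n = 0) then 0
                  else real p powi (int (fst xi) - int (zp_val p (snd xi))))"

definition qp_chi :: "nat \<Rightarrow> nat \<times> (nat \<Rightarrow> int) \<Rightarrow> complex" where
  "qp_chi p xi = exp (2 * complex_of_real pi * \<i> * complex_of_real (qp_frac p xi))"

definition fourier_muS :: "nat \<Rightarrow> (nat \<Rightarrow> int) set \<Rightarrow> nat \<times> (nat \<Rightarrow> int) \<Rightarrow> complex" where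
  "fourier_muS p S xi = (\<Sum>s\<in>S. cnj (qp_chi p (qp_scale p s xi)))"

end

theory Submission
  imports Defs "HOL-Computational_Algebra.Polynomial_Factorial"
begin

text \<open>Write \<open>\<xi> = p^-k z\<close> and let \<open>a\<^sub>s\<close> be the residue of \<open>s z\<close> modulo \<open>p^k\<close>. The Fourier
  sum is the conjugate of \<open>\<Sum>\<^sub>s \<zeta>^a\<^sub>s\<close> for a primitive \<open>p^k\<close>-th root of unity \<open>\<zeta>\<close>, and
  \<open>|(s - t)\<xi>|\<^sub>p = p\<close> says that \<open>a\<^sub>s \<noteq> a\<^sub>t\<close> but \<open>a\<^sub>s \<equiv> a\<^sub>t (mod p^(k-1))\<close>. For \<open>k = 0\<close> the
  sum is \<open>p \<noteq> 0\<close> and no such norm equals \<open>p\<close>. For \<open>k = m + 1\<close>, if the \<open>p\<close> exponents are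
  distinct and congruent mod \<open>p^m\<close> then the powers \<open>\<zeta>^a\<^sub>s\<close> form a coset of the \<open>p\<close>-th roots of
  unity and sum to zero. Conversely, a vanishing sum makes \<open>\<Sum>\<^sub>s X^a\<^sub>s\<close> a multiple of the
  cyclotomic polynomial of order \<open>p^(m+1)\<close>, which is irreducible by Eisenstein's criterion, so
  the multiplicities of the exponents are \<open>p^m\<close>-periodic; with only \<open>p\<close> exponents available,
  the residue class mod \<open>p^m\<close> of any exponent is hit exactly once on each of the \<open>p\<close> levels.\<close>

lemma add_power_prime_eq:
  fixes a b :: "'a::comm_ring_1"
  assumes "prime p"
  shows "\<exists>Q. (a + b) ^ p = a ^ p + b ^ p + of_nat p * Q"
proof -
  have p1: "p > 1" using assms prime_gt_1_nat by blast
  have split: "{..p} = insert 0 (insert p {1..<p})" using p1 by auto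
  have choose_eq: "p choose k = p * ((p choose k) div p)" if "k \<in> {1..<p}" for k
    using dvd_choose_prime[of k p] assms that by simp
  define Q where "Q = (\<Sum>k\<in>{1..<p}. of_nat ((p choose k) div p) * a ^ k * b ^ (p - k))"
  have "(a + b) ^ p = (\<Sum>k\<le>p. of_nat (p choose k) * a ^ k * b ^ (p - k))"
    by (rule binomial_ring)
  also have "\<dots> = b ^ p + a ^ p + (\<Sum>k\<in>{1..<p}. of_nat (p choose k) * a ^ k * b ^ (p - k))"
    unfolding split using p1 by (simp add: sum.insert)
  also have "(\<Sum>k\<in>{1..<p}. of_nat (p choose k) * a ^ k * b ^ (p - k)) = of_nat p * Q"
    unfolding Q_def sum_distrib_left
    by (rule sum.cong[OF refl], subst choose_eq, auto simp: mult.assoc)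
  finally show ?thesis by (auto simp: algebra_simps)
qed

lemma power_add_multiple_eq:
  fixes b q :: "'a::comm_ring_1"
  shows "\<exists>Q. (b + of_nat p * q) ^ n = b ^ n + of_nat p * Q"
proof (induction n)
  case 0
  show ?case by (auto intro: exI[of _ 0])
next
  case (Suc n)
  then obtain Q where "(b + of_nat p * q) ^ n = b ^ n + of_nat p * Q" by blast
  then have "(b + of_nat p * q) ^ Suc n = b ^ Suc n + of_nat p * (Q * b + b ^ n * q + of_nat p * Q * q)"
    by (simp add: algebra_simps)
  then show ?case by blast
qed

lemma X_plus_1_power_prime_power:
  assumes "prime p"
  shows "\<exists>Q. ([:1, 1:] :: int poly) ^ (p ^ n) = monom 1 (p ^ n) + 1 + of_nat p * Q"
proof (induction n)
  case 0
  show ?case by (rule exI[of _ 0]) (simp add: monom_Suc one_pCons)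
next
  case (Suc n)
  then obtain Q where Q: "([:1, 1:] :: int poly) ^ (p ^ n) = monom 1 (p ^ n) + 1 + of_nat p * Q"
    by blast
  obtain Q1 where Q1: "(monom 1 (p ^ n) + 1 + of_nat p * Q) ^ p = (monom 1 (p ^ n) + 1 :: int poly) ^ p + of_nat p * Q1"
    using power_add_multiple_eq by blast
  obtain Q2 where Q2: "(monom 1 (p ^ n) + 1 :: int poly) ^ p = monom 1 (p ^ n) ^ p + 1 ^ p + of_nat p * Q2"
    using add_power_prime_eq[OF assms] by blast
  have "([:1, 1:] :: int poly) ^ (p ^ Suc n) = (([:1, 1:] :: int poly) ^ (p ^ n)) ^ p"
    by (simp add: power_mult[symmetric] mult.commute)
  also have "\<dots> = monom 1 (p ^ Suc n) + 1 + of_nat p * (Q2 + Q1)"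
    unfolding Q Q1 Q2 by (simp add: monom_power algebra_simps mult.commute)
  finally show ?case by blast
qed

lemma not_dvd_coeff_mult_lowest:
  fixes g h :: "int poly" and q :: int
  assumes "prime q" and "\<not> q dvd coeff g i" and "\<not> q dvd coeff h j"
    and below_i: "\<forall>a<i. q dvd coeff g a" and below_j: "\<forall>b<j. q dvd coeff h b"
  shows "\<not> q dvd coeff (g * h) (i + j)"
proof
  assume dvd: "q dvd coeff (g * h) (i + j)"
  have "coeff (g * h) (i + j) = coeff g i * coeff h j + (\<Sum>a\<in>{..i+j}-{i}. coeff g a * coeff h (i + j - a))"
    unfolding coeff_mult by (subst sum.remove[of _ i]) auto
  moreover have "q dvd (\<Sum>a\<in>{..i+j}-{i}. coeff g a * coeff h (i + j - a))"
  proof (rule dvd_sum)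
    fix a assume a: "a \<in> {..i+j}-{i}"
    show "q dvd coeff g a * coeff h (i + j - a)"
    proof (cases "a < i")
      case True
      then show ?thesis using below_i by auto
    next
      case False
      then have "i + j - a < j" using a by auto
      then show ?thesis using below_j by auto
    qed
  qed
  ultimately have "q dvd coeff g i * coeff h j" using dvd by (simp add: dvd_add_left_iff)
  then show False using assms(1-3) by (simp add: prime_dvd_mult_iff)
qed

lemma eisenstein_criterion:
  fixes g h :: "int poly" and q :: int
  assumes q: "prime q" and lead: "\<not> q dvd lead_coeff (g * h)"
    and low: "\<forall>i<degree (g * h). q dvd coeff (g * h) i" and const: "\<not> q ^ 2 dvd coeff (g * h) 0"
  shows "degree g = 0 \<or> degree h = 0"
proof (rule ccontr)
  assume "\<not> (degree g = 0 \<or> degree h = 0)"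
  then have dg: "degree g > 0" and dh: "degree h > 0" by auto
  have "g \<noteq> 0" "h \<noteq> 0" using lead by auto
  then have deg: "degree (g * h) = degree g + degree h" by (simp add: degree_mult_eq)
  have "\<not> q dvd lead_coeff g" "\<not> q dvd lead_coeff h" using lead by (auto simp: lead_coeff_mult)
  define i where "i = (LEAST i. \<not> q dvd coeff g i)"
  define j where "j = (LEAST j. \<not> q dvd coeff h j)"
  have gi: "\<not> q dvd coeff g i" and ig: "i \<le> degree g" and below_i: "\<forall>a<i. q dvd coeff g a"
    unfolding i_def using LeastI Least_le not_less_Least \<open>\<not> q dvd lead_coeff g\<close> by metis+
  have hj: "\<not> q dvd coeff h j" and jh: "j \<le> degree h" and below_j: "\<forall>b<j. q dvd coeff h b"
    unfolding j_def using LeastI Least_le not_less_Least \<open>\<not> q dvd lead_coeff h\<close> by metis+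
  have "\<not> q dvd coeff (g * h) (i + j)" using not_dvd_coeff_mult_lowest[OF q gi hj below_i below_j] .
  then have "\<not> i + j < degree (g * h)" using low by auto
  then have "i = degree g" "j = degree h" using ig jh deg by auto
  then have "q dvd coeff g 0" "q dvd coeff h 0" using below_i below_j dg dh by auto
  then have "q ^ 2 dvd coeff g 0 * coeff h 0" by (simp add: power2_eq_square mult_dvd_mono)
  then show False using const by (simp add: coeff_mult_0)
qed

text \<open>The \<open>p^(m+1)\<close>-th cyclotomic polynomial \<open>(X^(p^(m+1)) - 1) / (X^(p^m) - 1)\<close>.\<close>
definition prime_power_cyclotomic :: "nat \<Rightarrow> nat \<Rightarrow> int poly" where
  "prime_power_cyclotomic p m = (\<Sum>j<p. monom 1 (p ^ m * j))"

lemma coeff_prime_power_cyclotomic: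
  assumes "p > 0"
  shows "coeff (prime_power_cyclotomic p m) n = (if n mod p ^ m = 0 \<and> n div p ^ m < p then 1 else 0)"
proof -
  have "coeff (prime_power_cyclotomic p m) n = (\<Sum>j<p. if p ^ m * j = n then 1 else 0)"
    unfolding prime_power_cyclotomic_def coeff_sum coeff_monom by simp
  also have "\<dots> = (\<Sum>j<p. if n mod p ^ m = 0 \<and> j = n div p ^ m then 1 else 0)"
    by (rule sum.cong[OF refl]) (use assms in auto)
  finally show ?thesis by simp
qed

lemma degree_prime_power_cyclotomic:
  assumes "p > 0"
  shows "degree (prime_power_cyclotomic p m) = p ^ m * (p - 1)"
proof (rule antisym)
  show "degree (prime_power_cyclotomic p m) \<le> p ^ m * (p - 1)"
  proof (rule degree_le, intro allI impI)
    fix i assume i: "p ^ m * (p - 1) < i"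
    have "\<not> (i mod p ^ m = 0 \<and> i div p ^ m < p)"
    proof
      assume "i mod p ^ m = 0 \<and> i div p ^ m < p"
      then have "i = p ^ m * (i div p ^ m)" and "i div p ^ m \<le> p - 1"
        by (metis add_0_right div_mult_mod_eq mult.commute, linarith)
      then have "i \<le> p ^ m * (p - 1)" by (metis mult_le_mono2)
      then show False using i by simp
    qed
    then show "coeff (prime_power_cyclotomic p m) i = 0"
      using coeff_prime_power_cyclotomic[OF assms] by simp
  qed
  show "p ^ m * (p - 1) \<le> degree (prime_power_cyclotomic p m)"
    by (rule le_degree) (use assms in \<open>simp add: coeff_prime_power_cyclotomic\<close>)
qed

lemma pcompose_monom_1: "pcompose (monom 1 n) q = q ^ n"
  by (induction n) (auto simp: monom_Suc pcompose_pCons pcompose_1)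

text \<open>Cancel \<open>X^(p^m)\<close> in \<open>\<Phi>(X+1) ((X+1)^(p^m) - 1) = (X+1)^(p^(m+1)) - 1\<close>, read modulo \<open>p\<close>.\<close>
lemma coeff_prime_power_cyclotomic_shift:
  assumes "prime p"
  shows "\<exists>c. coeff (pcompose (prime_power_cyclotomic p m) [:1, 1:]) i
           = (if i = p ^ m * (p - 1) then 1 else 0) + int p * c"
proof -
  define F where "F = pcompose (prime_power_cyclotomic p m) [:1, 1:]"
  have "F * ([:1, 1:] ^ (p ^ m) - 1) = (\<Sum>j<p. [:1, 1:] ^ (p ^ m * Suc j) - [:1, 1:] ^ (p ^ m * j))"
    unfolding F_def prime_power_cyclotomic_def pcompose_sum pcompose_monom_1 sum_distrib_right
    by (rule sum.cong[OF refl]) (simp add: left_diff_distrib power_add mult.commute)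
  also have "\<dots> = [:1, 1:] ^ (p ^ Suc m) - 1"
    by (subst sum_lessThan_telescope[where f = "\<lambda>j. [:1, 1:] ^ (p ^ m * j)"]) (simp add: mult.commute)
  finally have tele: "F * ([:1, 1:] ^ (p ^ m) - 1) = [:1, 1:] ^ (p ^ Suc m) - 1" .
  obtain Q1 where Q1: "([:1, 1:] :: int poly) ^ (p ^ m) = monom 1 (p ^ m) + 1 + of_nat p * Q1"
    using X_plus_1_power_prime_power[OF assms] by blast
  obtain Q2 where Q2: "([:1, 1:] :: int poly) ^ (p ^ Suc m) = monom 1 (p ^ Suc m) + 1 + of_nat p * Q2"
    using X_plus_1_power_prime_power[OF assms] by blast
  have shifted: "monom 1 (p ^ m) * F = monom 1 (p ^ Suc m) + of_nat p * (Q2 - F * Q1)"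
    using tele unfolding Q1 Q2 by (simp add: algebra_simps)
  have exp: "p ^ Suc m = p ^ m * (p - 1) + p ^ m"
    using prime_gt_0_nat[OF assms] by (cases p) auto
  have "coeff F i = coeff (monom 1 (p ^ m) * F) (p ^ m + i)"
    by (simp add: coeff_monom_mult)
  also have "\<dots> = (if i = p ^ m * (p - 1) then 1 else 0) + int p * coeff (Q2 - F * Q1) (p ^ m + i)"
    unfolding shifted using exp by (simp add: coeff_monom of_nat_poly)
  finally show ?thesis unfolding F_def by blast
qed

lemma irreducible_prime_power_cyclotomic:
  assumes "prime p"
  shows "irreducible (prime_power_cyclotomic p m)"
proof -
  define \<Phi> where "\<Phi> = prime_power_cyclotomic p m"
  define F where "F = pcompose \<Phi> [:1, 1:]"
  have p1: "p > 1" using assms prime_gt_1_nat by blast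
  have deg: "degree \<Phi> = p ^ m * (p - 1)" "degree \<Phi> > 0"
    unfolding \<Phi>_def using degree_prime_power_cyclotomic[of p m] p1 by simp_all
  have coeff_F: "\<exists>c. coeff F i = (if i = degree F then 1 else 0) + int p * c" for i
    using coeff_prime_power_cyclotomic_shift[OF assms, of m i] deg(1)
    unfolding F_def \<Phi>_def by (simp add: degree_pcompose)
  have lead: "\<not> int p dvd lead_coeff F"
  proof
    assume "int p dvd lead_coeff F"
    moreover obtain c where "lead_coeff F = 1 + int p * c" using coeff_F[of "degree F"] by auto
    ultimately have "int p dvd 1" by (simp add: dvd_add_left_iff)
    then show False using p1 by simp
  qed
  have low: "\<forall>i<degree F. int p dvd coeff F i"
    using coeff_F by (metis add_0 dvd_triv_left less_irrefl)
  have "coeff F 0 = poly \<Phi> 1"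
    unfolding F_def by (simp add: poly_0_coeff_0[symmetric] poly_pcompose)
  also have "\<dots> = int p" unfolding \<Phi>_def prime_power_cyclotomic_def by (simp add: poly_sum poly_monom)
  finally have const: "\<not> (int p) ^ 2 dvd coeff F 0"
    using p1 by (simp add: power2_eq_square)
  have unit_if_const: "a dvd 1" if ab: "\<Phi> = a * b" and "degree a = 0" for a b
  proof -
    obtain c where c: "a = [:c:]" using \<open>degree a = 0\<close> by (auto elim: degree_eq_zeroE)
    have "1 = coeff \<Phi> 0" unfolding \<Phi>_def using p1 by (simp add: coeff_prime_power_cyclotomic)
    also have "\<dots> = c * coeff b 0" using ab c by (simp add: coeff_mult_0)
    finally have "c dvd 1" by (rule dvdI)
    then show ?thesis using c by (simp add: is_unit_const_poly_iff)
  qed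
  have "irreducible \<Phi>"
  proof (rule irreducibleI)
    show "\<Phi> \<noteq> 0" "\<not> \<Phi> dvd 1" using deg by (auto simp: is_unit_poly_iff)
    fix a b assume ab: "\<Phi> = a * b"
    then have F_ab: "F = pcompose a [:1, 1:] * pcompose b [:1, 1:]"
      unfolding F_def by (simp add: pcompose_mult)
    have "degree (pcompose a [:1, 1:]) = 0 \<or> degree (pcompose b [:1, 1:]) = 0"
      by (rule eisenstein_criterion[where q = "int p"]) (use assms lead low const in \<open>simp_all add: F_ab\<close>)
    then have "degree a = 0 \<or> degree b = 0" by (simp add: degree_pcompose)
    then show "a dvd 1 \<or> b dvd 1" using unit_if_const ab by (metis mult.commute)
  qed
  then show ?thesis unfolding \<Phi>_def .
qed

lemma map_poly_of_int_diff:
  "map_poly (of_int :: int \<Rightarrow> 'a::comm_ring_1) (f - g) = map_poly of_int f - map_poly of_int g"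
  by (intro poly_eqI) (simp add: coeff_map_poly)

lemma map_poly_of_int_mult:
  "map_poly (of_int :: int \<Rightarrow> 'a::comm_ring_1) (f * g) = map_poly of_int f * map_poly of_int g"
  by (intro poly_eqI) (simp add: coeff_map_poly coeff_mult)

lemma map_poly_of_int_sum:
  "map_poly (of_int :: int \<Rightarrow> 'a::comm_ring_1) (sum f A) = (\<Sum>x\<in>A. map_poly of_int (f x))"
  by (intro poly_eqI) (simp add: coeff_map_poly coeff_sum)

text \<open>Pseudo-division stands in for the division algorithm, which \<open>\<int>[X]\<close> lacks.\<close>
lemma dvd_smult_of_min_degree_root:
  fixes g h :: "int poly" and z :: complex
  assumes "g \<noteq> 0" and g_root: "poly (map_poly of_int g) z = 0"
    and minimal: "\<And>r. r \<noteq> 0 \<Longrightarrow> poly (map_poly of_int r) z = 0 \<Longrightarrow> degree g \<le> degree r"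
    and h_root: "poly (map_poly of_int h) z = 0"
  shows "\<exists>a. a \<noteq> 0 \<and> g dvd smult a h"
proof -
  obtain a q where "a \<noteq> 0" and div: "smult a h = g * q + pseudo_mod h g"
    using pseudo_mod(1)[OF \<open>g \<noteq> 0\<close>] by blast
  have "poly (map_poly of_int (pseudo_mod h g)) z = poly (map_poly of_int (smult a h - g * q)) z"
    by (simp add: div)
  also have "\<dots> = 0"
    using g_root h_root by (simp add: map_poly_of_int_diff map_poly_smult map_poly_of_int_mult)
  finally have "pseudo_mod h g = 0"
    using minimal[of "pseudo_mod h g"] pseudo_mod(2)[OF \<open>g \<noteq> 0\<close>, of h] by linarith
  then show ?thesis using \<open>a \<noteq> 0\<close> div by auto
qed

lemma prime_poly_dvd_of_common_root:
  fixes P f :: "int poly" and z :: complex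
  assumes P: "prime_elem P" "degree P > 0"
    and roots: "poly (map_poly of_int P) z = 0" "poly (map_poly of_int f) z = 0"
  shows "P dvd f"
proof -
  define annihilated_in_degree where "annihilated_in_degree n \<longleftrightarrow> (\<exists>g. g \<noteq> 0 \<and> poly (map_poly of_int g) z = 0 \<and> degree g = n)" for n
  have "annihilated_in_degree (degree P)" unfolding annihilated_in_degree_def using P(2) roots(1) by (intro exI[of _ P]) auto
  then have "annihilated_in_degree (LEAST n. annihilated_in_degree n)" by (rule LeastI)
  then obtain g where g: "g \<noteq> 0" "poly (map_poly of_int g) z = 0" and deg_g: "degree g = (LEAST n. annihilated_in_degree n)"
    unfolding annihilated_in_degree_def by blast
  have minimal: "degree g \<le> degree r" if "r \<noteq> 0" "poly (map_poly of_int r) z = 0" for r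
    unfolding deg_g by (rule Least_le) (use that annihilated_in_degree_def in blast)
  have not_dvd_const: "\<not> P dvd [:c:]" if "c \<noteq> 0" for c
    using dvd_imp_degree_le[of P "[:c:]"] that P(2) by auto
  obtain a where "a \<noteq> 0" and "g dvd smult a P"
    using dvd_smult_of_min_degree_root[OF g minimal roots(1)] by blast
  from \<open>g dvd smult a P\<close> obtain q where q: "smult a P = g * q" by (rule dvdE)
  have "\<not> P dvd q"
  proof
    assume "P dvd q"
    then obtain q' where "q = P * q'" by (rule dvdE)
    with q have "P * [:a:] = P * (g * q')" by (simp add: algebra_simps)
    moreover have "P \<noteq> 0" using P(2) by auto
    ultimately have a_eq: "[:a:] = g * q'" using mult_left_cancel by blast
    with \<open>a \<noteq> 0\<close> have "q' \<noteq> 0" by auto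
    then have "degree [:a:] = degree g + degree q'" unfolding a_eq using g(1) by (rule degree_mult_eq[rotated])
    then have "degree g = 0" by simp
    then obtain c where "g = [:c:]" by (auto elim: degree_eq_zeroE)
    then show False using g by (simp add: map_poly_pCons)
  qed
  moreover have "P dvd g * q" unfolding q[symmetric] by (rule dvd_smult) simp
  ultimately have "P dvd g" using P(1) by (simp add: prime_elem_dvd_mult_iff)
  obtain b where "b \<noteq> 0" "g dvd smult b f"
    using dvd_smult_of_min_degree_root[OF g minimal roots(2)] by blast
  then have "P dvd [:b:] * f" using \<open>P dvd g\<close> by (simp add: dvd_trans)
  then have "P dvd [:b:] \<or> P dvd f" by (rule prime_elem_dvd_multD[OF P(1)])
  then show ?thesis using not_dvd_const[OF \<open>b \<noteq> 0\<close>] by blast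
qed

definition unity_root :: "nat \<Rightarrow> complex" where
  "unity_root n = exp (2 * of_real pi * \<i> / of_nat n)"

lemma unity_root_1: "unity_root 1 = 1"
  unfolding unity_root_def by simp

lemma exp_frac_eq_unity_root_power:
  "exp (2 * of_real pi * \<i> * of_real (real a / real n)) = unity_root n ^ a"
  unfolding unity_root_def exp_of_nat_mult[symmetric] by (simp add: field_simps)

lemma unity_root_mult_power_mult:
  assumes "M > 0"
  shows "unity_root (M * n) ^ (M * j) = unity_root n ^ j"
  unfolding unity_root_def exp_of_nat_mult[symmetric] using assms by (simp add: field_simps)

lemma sum_unity_root_powers:
  assumes "n > 1"
  shows "(\<Sum>j<n. unity_root n ^ j) = 0"
proof -
  have "unity_root n ^ n = 1" "unity_root n \<noteq> 1"
    unfolding unity_root_def using complex_root_unity[of n 1] complex_root_unity_eq_1[of n 1] assms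
    by simp_all
  then show ?thesis using power_diff_1_eq[of "unity_root n" n] by simp
qed

lemma sum_unity_root_coset:
  fixes S :: "'b set" and A :: "'b \<Rightarrow> nat"
  assumes "n > 1" and "finite S" and "card S = n" and A_less: "\<forall>s\<in>S. A s < M * n"
    and coset: "\<forall>s\<in>S. \<forall>s'\<in>S. s \<noteq> s' \<longrightarrow> A s \<noteq> A s' \<and> A s mod M = A s' mod M"
  shows "(\<Sum>s\<in>S. unity_root (M * n) ^ A s) = 0"
proof -
  obtain s0 where "s0 \<in> S" using assms(1,3) by fastforce
  then have "M > 0" using A_less by (cases "M = 0") auto
  define r where "r = A s0 mod M"
  define J where "J s = A s div M" for s
  have A_eq: "A s = r + M * J s" if "s \<in> S" for s
  proof -
    have "A s mod M = r"
      using coset that \<open>s0 \<in> S\<close> unfolding r_def by (cases "s = s0") blast+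
    then show ?thesis unfolding J_def using mod_mult_div_eq[of "A s" M] by linarith
  qed
  have "inj_on J S"
  proof (rule inj_onI)
    fix s s' assume "s \<in> S" "s' \<in> S" "J s = J s'"
    then have "A s = A s'" using A_eq by simp
    then show "s = s'" using coset \<open>s \<in> S\<close> \<open>s' \<in> S\<close> by blast
  qed
  moreover have "J ` S \<subseteq> {..<n}"
  proof
    fix x assume "x \<in> J ` S"
    then obtain s where "s \<in> S" "x = J s" by blast
    then show "x \<in> {..<n}"
      using A_less \<open>M > 0\<close> unfolding J_def by (simp add: div_less_iff_less_mult mult.commute)
  qed
  ultimately have J_image: "J ` S = {..<n}"
    using assms(2,3) card_image card_subset_eq by (metis card_lessThan finite_lessThan)
  define \<zeta> where "\<zeta> = unity_root (M * n)"
  have "(\<Sum>s\<in>S. \<zeta> ^ A s) = (\<Sum>s\<in>S. \<zeta> ^ r * (\<zeta> ^ M) ^ J s)"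
    by (rule sum.cong[OF refl]) (simp add: A_eq power_add power_mult)
  also have "\<dots> = \<zeta> ^ r * (\<Sum>j\<in>J ` S. (\<zeta> ^ M) ^ j)"
    by (simp add: sum_distrib_left sum.reindex[OF \<open>inj_on J S\<close>])
  also have "(\<Sum>j\<in>J ` S. (\<zeta> ^ M) ^ j) = (\<Sum>j<n. unity_root n ^ j)"
    unfolding J_image \<zeta>_def power_mult[symmetric] unity_root_mult_power_mult[OF \<open>M > 0\<close>] ..
  finally show ?thesis unfolding \<zeta>_def using sum_unity_root_powers[OF assms(1)] by simp
qed

lemma coeff_prime_power_cyclotomic_mult:
  assumes "p > 0" and "degree q < p ^ m" and "r < p ^ m" and "j < p"
  shows "coeff (prime_power_cyclotomic p m * q) (r + p ^ m * j) = coeff q r"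
proof -
  define M where "M = p ^ m"
  have summand: "coeff (monom 1 (M * i) * q) (r + M * j) = (if i = j then coeff q r else 0)" for i
  proof (cases i j rule: linorder_cases)
    case less
    then obtain d where "j = i + Suc d" using less_iff_Suc_add by auto
    then have "r + M * j = M * i + (r + M * Suc d)" by (simp add: algebra_simps)
    moreover have "degree q < r + M * Suc d"
      using assms(2) unfolding M_def mult_Suc_right by linarith
    then have "coeff q (r + M * Suc d) = 0" by (rule coeff_eq_0)
    ultimately show ?thesis using less by (simp add: coeff_monom_mult)
  next
    case equal
    then show ?thesis by (simp add: coeff_monom_mult)
  next
    case greater
    then have "M * Suc j \<le> M * i" by (intro mult_le_mono2) simp
    then have "r + M * j < M * i" using assms(3) unfolding M_def mult_Suc_right by linarith
    then show ?thesis using greater by (simp add: coeff_monom_mult)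
  qed
  have "coeff (prime_power_cyclotomic p m * q) (r + M * j) = (\<Sum>i<p. coeff (monom 1 (M * i) * q) (r + M * j))"
    unfolding prime_power_cyclotomic_def M_def sum_distrib_right coeff_sum ..
  also have "\<dots> = coeff q r" unfolding summand using assms(4) by simp
  finally show ?thesis unfolding M_def .
qed

text \<open>The integer polynomial \<open>\<Sum>\<^sub>s X^(A s)\<close> vanishes at a primitive \<open>p^(m+1)\<close>-th root of
  unity, so it is a multiple of the cyclotomic polynomial by a polynomial of degree \<open>< p^m\<close>;
  hence its coefficients, the fibre sizes of \<open>A\<close>, are \<open>p^m\<close>-periodic.\<close>
lemma card_fibres_periodic_of_vanishing_sum:
  fixes S :: "'b set" and A :: "'b \<Rightarrow> nat"
  assumes "prime p" and "finite S" and A_less: "\<forall>s\<in>S. A s < p ^ Suc m"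
    and vanish: "(\<Sum>s\<in>S. unity_root (p ^ Suc m) ^ A s) = 0"
    and "r < p ^ m" and "j < p"
  shows "card {s\<in>S. A s = r + p ^ m * j} = card {s\<in>S. A s = r}"
proof -
  define f where "f = (\<Sum>s\<in>S. monom (1::int) (A s))"
  have coeff_f: "coeff f a = int (card {s\<in>S. A s = a})" for a
  proof -
    have "coeff f a = (\<Sum>s\<in>S. if A s = a then 1 else 0)"
      unfolding f_def coeff_sum coeff_monom by (rule sum.cong) auto
    then show ?thesis using sum.inter_filter[OF assms(2), of "\<lambda>_. 1::int" "\<lambda>s. A s = a"] by simp
  qed
  have p1: "p > 1" using assms(1) prime_gt_1_nat by blast
  have "poly (map_poly of_int (prime_power_cyclotomic p m)) (unity_root (p ^ Suc m)) = (\<Sum>j<p. unity_root (p ^ m * p) ^ (p ^ m * j))"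
    unfolding prime_power_cyclotomic_def map_poly_of_int_sum by (simp add: poly_sum map_poly_monom poly_monom mult.commute)
  also have "\<dots> = 0"
    using p1 by (simp add: unity_root_mult_power_mult sum_unity_root_powers)
  finally have \<Phi>_root: "poly (map_poly of_int (prime_power_cyclotomic p m)) (unity_root (p ^ Suc m)) = 0" .
  have f_root: "poly (map_poly of_int f) (unity_root (p ^ Suc m)) = 0"
    using vanish unfolding f_def map_poly_of_int_sum by (simp add: poly_sum map_poly_monom poly_monom)
  have deg_\<Phi>: "degree (prime_power_cyclotomic p m) > 0"
    using p1 by (simp add: degree_prime_power_cyclotomic)
  have "prime_power_cyclotomic p m dvd f"
    using irreducible_imp_prime_poly[OF irreducible_prime_power_cyclotomic[OF assms(1)]] deg_\<Phi> \<Phi>_root f_root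
    by (rule prime_poly_dvd_of_common_root)
  then obtain q where f_eq: "f = prime_power_cyclotomic p m * q" by (rule dvdE)
  have p_pow: "p ^ Suc m = p ^ m * (p - 1) + p ^ m"
    using p1 by (cases p) (simp_all add: algebra_simps)
  have "degree f < p ^ Suc m"
  proof (rule degree_lessI)
    show "\<forall>k\<ge>p ^ Suc m. coeff f k = 0"
    proof (intro allI impI)
      fix k assume "k \<ge> p ^ Suc m"
      then have "{s\<in>S. A s = k} = {}" using A_less by force
      then show "coeff f k = 0" unfolding coeff_f by (metis card.empty of_nat_0)
    qed
  qed (use p1 in simp)
  then have "degree q < p ^ m"
  proof (cases "q = 0")
    case False
    moreover have "prime_power_cyclotomic p m \<noteq> 0" using deg_\<Phi> by auto
    ultimately have "degree f = p ^ m * (p - 1) + degree q"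
      unfolding f_eq using p1 by (simp add: degree_mult_eq degree_prime_power_cyclotomic)
    then show ?thesis using \<open>degree f < p ^ Suc m\<close> p_pow by linarith
  qed (use p1 in simp)
  then have "coeff f (r + p ^ m * j) = coeff q r" "coeff f (r + p ^ m * 0) = coeff q r"
    unfolding f_eq using assms(5,6) p1
    by (simp_all only: coeff_prime_power_cyclotomic_mult zero_less_one less_trans[OF zero_less_one])
  then show ?thesis unfolding coeff_f by simp
qed

text \<open>By periodicity the residue class of \<open>A s\<close> has \<open>n\<close> times as many preimages as \<open>A s\<close>
  itself; since \<open>S\<close> has only \<open>n\<close> elements, that class is all of \<open>S\<close> and the fibre is a singleton.\<close>
lemma coset_of_periodic_fibres:
  fixes S :: "'b set" and A :: "'b \<Rightarrow> nat"
  assumes "finite S" and "card S = n" and A_less: "\<forall>s\<in>S. A s < M * n"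
    and periodic: "\<And>r j. r < M \<Longrightarrow> j < n \<Longrightarrow> card {s\<in>S. A s = r + M * j} = card {s\<in>S. A s = r}"
  shows "\<forall>s\<in>S. \<forall>s'\<in>S. s \<noteq> s' \<longrightarrow> A s \<noteq> A s' \<and> A s mod M = A s' mod M"
proof -
  define fibre where "fibre a = {s\<in>S. A s = a}" for a
  have single_class: "card (fibre (A s)) = 1 \<and> (\<forall>s'\<in>S. A s' mod M = A s mod M)" if "s \<in> S" for s
  proof -
    have "M > 0" using A_less that by (cases "M = 0") auto
    define r where "r = A s mod M"
    have "r < M" unfolding r_def using \<open>M > 0\<close> by simp
    have level_less: "A s' div M < n" if "s' \<in> S" for s'
      using A_less that \<open>M > 0\<close> by (simp add: div_less_iff_less_mult mult.commute)
    have "card (fibre (r + M * j)) = card (fibre (A s))" if "j < n" for j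
      using periodic[OF \<open>r < M\<close> that] periodic[OF \<open>r < M\<close> level_less[OF \<open>s \<in> S\<close>]]
      unfolding fibre_def r_def by (simp add: mult.commute)
    moreover have class_eq: "{s'\<in>S. A s' mod M = r} = (\<Union>j<n. fibre (r + M * j))"
    proof (rule set_eqI, rule iffI)
      fix x assume x: "x \<in> {s'\<in>S. A s' mod M = r}"
      then have "A x mod M = r" by simp
      then have "A x = r + M * (A x div M)" using mod_mult_div_eq[of "A x" M] by linarith
      then show "x \<in> (\<Union>j<n. fibre (r + M * j))" using x level_less unfolding fibre_def by auto
    qed (use \<open>r < M\<close> in \<open>auto simp: fibre_def\<close>)
    have "card (\<Union>j<n. fibre (r + M * j)) = (\<Sum>j<n. card (fibre (r + M * j)))"
      by (rule card_UN_disjoint) (use \<open>finite S\<close> \<open>M > 0\<close> in \<open>auto simp: fibre_def\<close>)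
    ultimately have class_card: "card {s'\<in>S. A s' mod M = r} = n * card (fibre (A s))"
      unfolding class_eq by simp
    have class_sub: "{s'\<in>S. A s' mod M = r} \<subseteq> S" by blast
    then have "card {s'\<in>S. A s' mod M = r} \<le> n"
      using card_mono[OF \<open>finite S\<close>] assms(2) by blast
    moreover have "card (fibre (A s)) > 0"
      using \<open>finite S\<close> that unfolding fibre_def by (auto simp: card_gt_0_iff)
    moreover have "n > 0" using assms(1,2) that card_gt_0_iff by blast
    ultimately have "card (fibre (A s)) = 1" "card {s'\<in>S. A s' mod M = r} = card S"
      using class_card assms(2) by (simp_all add: nat_mult_le_cancel_disj)
    then have "{s'\<in>S. A s' mod M = r} = S"
      using card_subset_eq[OF \<open>finite S\<close> class_sub] by simp
    then show ?thesis using \<open>card (fibre (A s)) = 1\<close> unfolding r_def by auto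
  qed
  show ?thesis
  proof (intro ballI impI conjI)
    fix s s' assume "s \<in> S" "s' \<in> S" "s \<noteq> s'"
    show "A s mod M = A s' mod M" using single_class[OF \<open>s \<in> S\<close>] \<open>s' \<in> S\<close> by simp
    show "A s \<noteq> A s'"
    proof
      assume "A s = A s'"
      then have "{s, s'} \<subseteq> fibre (A s)" using \<open>s \<in> S\<close> \<open>s' \<in> S\<close> unfolding fibre_def by auto
      then have "card {s, s'} \<le> card (fibre (A s))"
        by (rule card_mono[rotated]) (simp add: fibre_def \<open>finite S\<close>)
      then show False using single_class[OF \<open>s \<in> S\<close>] \<open>s \<noteq> s'\<close> by simp
    qed
  qed
qed

lemma sum_unity_root_eq_0_iff:
  fixes S :: "'b set" and A :: "'b \<Rightarrow> nat"
  assumes "prime p" and "finite S" and "card S = p" and A_less: "\<forall>s\<in>S. A s < p ^ Suc m"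
  shows "(\<Sum>s\<in>S. unity_root (p ^ Suc m) ^ A s) = 0 \<longleftrightarrow>
         (\<forall>s\<in>S. \<forall>s'\<in>S. s \<noteq> s' \<longrightarrow> A s \<noteq> A s' \<and> A s mod p ^ m = A s' mod p ^ m)"
proof -
  have "p > 1" using assms(1) prime_gt_1_nat by blast
  have A_less': "\<forall>s\<in>S. A s < p ^ m * p" using A_less by (simp only: power_Suc2)
  show ?thesis
  proof
    assume "(\<Sum>s\<in>S. unity_root (p ^ Suc m) ^ A s) = 0"
    from card_fibres_periodic_of_vanishing_sum[OF assms(1,2) A_less this]
    show "\<forall>s\<in>S. \<forall>s'\<in>S. s \<noteq> s' \<longrightarrow> A s \<noteq> A s' \<and> A s mod p ^ m = A s' mod p ^ m"
      by (rule coset_of_periodic_fibres[OF assms(2,3) A_less'])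
  next
    assume "\<forall>s\<in>S. \<forall>s'\<in>S. s \<noteq> s' \<longrightarrow> A s \<noteq> A s' \<and> A s mod p ^ m = A s' mod p ^ m"
    then show "(\<Sum>s\<in>S. unity_root (p ^ Suc m) ^ A s) = 0"
      using sum_unity_root_coset[OF \<open>p > 1\<close> assms(2,3) A_less'] by (simp only: power_Suc2)
  qed
qed

lemma Zp_mod_power:
  assumes "x \<in> Zp p" and "n \<le> n'"
  shows "x n' mod int p ^ n = x n"
  using assms(2)
proof (induction n' rule: dec_induct)
  case base
  show ?case using assms(1) unfolding Zp_def by simp
next
  case (step n')
  have "x (Suc n') mod int p ^ n = x (Suc n') mod int p ^ n' mod int p ^ n"
    using step(1) by (simp add: mod_mod_cancel le_imp_power_dvd)
  also have "\<dots> = x n" using assms(1) step(3) unfolding Zp_def by simp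
  finally show ?case .
qed

lemma Zp_at_0:
  assumes "x \<in> Zp p"
  shows "x 0 = 0"
proof -
  have "0 \<le> x 0" "x 0 < int p ^ 0" using assms unfolding Zp_def by blast+
  then show ?thesis by simp
qed

lemma zp_mult_in_Zp:
  assumes "p > 0" and "x \<in> Zp p" and "y \<in> Zp p"
  shows "zp_mult p x y \<in> Zp p"
proof -
  have "zp_mult p x y (Suc n) mod int p ^ n = zp_mult p x y n" for n
  proof -
    have "zp_mult p x y (Suc n) mod int p ^ n = x (Suc n) mod int p ^ n * (y (Suc n) mod int p ^ n) mod int p ^ n"
      unfolding zp_mult_def by (simp add: mod_mod_cancel le_imp_power_dvd mod_mult_eq)
    then show ?thesis using assms(2,3) unfolding Zp_def zp_mult_def by simp
  qed
  then show ?thesis using assms(1) unfolding Zp_def zp_mult_def by simp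
qed

lemma zp_diff_in_Zp:
  assumes "p > 0" and "x \<in> Zp p" and "y \<in> Zp p"
  shows "zp_diff p x y \<in> Zp p"
proof -
  have "zp_diff p x y (Suc n) mod int p ^ n = zp_diff p x y n" for n
  proof -
    have "zp_diff p x y (Suc n) mod int p ^ n = (x (Suc n) mod int p ^ n - y (Suc n) mod int p ^ n) mod int p ^ n"
      unfolding zp_diff_def by (simp add: mod_mod_cancel le_imp_power_dvd mod_diff_eq)
    then show ?thesis using assms(2,3) unfolding Zp_def zp_diff_def by simp
  qed
  then show ?thesis using assms(1) unfolding Zp_def zp_diff_def by simp
qed

lemma zp_mult_zp_diff:
  "zp_mult p (zp_diff p s s') z n = (zp_mult p s z n - zp_mult p s' z n) mod int p ^ n"
  unfolding zp_mult_def zp_diff_def by (simp add: mod_mult_left_eq mod_diff_eq left_diff_distrib)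

lemma power_int_eq_base_iff:
  fixes b :: real
  assumes "b > 1"
  shows "b powi e = b \<longleftrightarrow> e = 1"
  using power_int_strict_increasing[of e 1 b] power_int_strict_increasing[of 1 e b] assms
  by (cases e "1::int" rule: linorder_cases) auto

lemma qp_abs_eq_p_iff:
  assumes "p > 1"
  shows "qp_abs p (k, d) = real p \<longleftrightarrow> (\<exists>n. d n \<noteq> 0) \<and> int k - int (zp_val p d) = 1"
  unfolding qp_abs_def using power_int_eq_base_iff[of "real p"] assms by auto

lemma zp_val_eq_iff:
  assumes "d \<in> Zp p"
  shows "(\<exists>n. d n \<noteq> 0) \<and> zp_val p d = m \<longleftrightarrow> d (Suc m) \<noteq> 0 \<and> d m = 0"
proof
  assume "(\<exists>n. d n \<noteq> 0) \<and> zp_val p d = m"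
  then obtain n where "d n \<noteq> 0" and val: "(LEAST n. d (Suc n) \<noteq> 0) = m"
    unfolding zp_val_def by blast
  then have "d (Suc n) \<noteq> 0" using Zp_mod_power[OF assms, of n "Suc n"] by auto
  then have "d (Suc m) \<noteq> 0" unfolding val[symmetric] by (rule LeastI)
  moreover have "d m = 0"
  proof (cases m)
    case 0
    then show ?thesis using Zp_at_0[OF assms] by simp
  next
    case (Suc m')
    then show ?thesis using not_less_Least[of m' "\<lambda>n. d (Suc n) \<noteq> 0"] val by simp
  qed
  ultimately show "d (Suc m) \<noteq> 0 \<and> d m = 0" ..
next
  assume level: "d (Suc m) \<noteq> 0 \<and> d m = 0"
  have "zp_val p d = m"
    unfolding zp_val_def
  proof (rule Least_equality)
    show "d (Suc m) \<noteq> 0" using level ..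
    fix n assume "d (Suc n) \<noteq> 0"
    moreover have "d (Suc n) = d m mod int p ^ Suc n" if "Suc n \<le> m"
      using Zp_mod_power[OF assms that] by simp
    ultimately show "m \<le> n" using level by fastforce
  qed
  then show "(\<exists>n. d n \<noteq> 0) \<and> zp_val p d = m" using level by blast
qed

lemma zp_mult_diff_levels_iff:
  fixes m :: nat
  assumes "p > 0" and "s \<in> Zp p" and "s' \<in> Zp p" and "z \<in> Zp p"
  defines "a \<equiv> zp_mult p s z (Suc m)" and "a' \<equiv> zp_mult p s' z (Suc m)"
  shows "zp_mult p (zp_diff p s s') z (Suc m) \<noteq> 0 \<and> zp_mult p (zp_diff p s s') z m = 0 \<longleftrightarrow>
         a \<noteq> a' \<and> a mod int p ^ m = a' mod int p ^ m"
proof -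
  have range: "0 \<le> a" "a < int p ^ Suc m" "0 \<le> a'" "a' < int p ^ Suc m"
    unfolding a_def a'_def zp_mult_def using assms(1) by simp_all
  have "zp_mult p (zp_diff p s s') z (Suc m) = 0 \<longleftrightarrow> (a - a') mod int p ^ Suc m = 0"
    unfolding zp_mult_zp_diff a_def a'_def ..
  also have "\<dots> \<longleftrightarrow> a = a'"
    using range by (simp add: mod_eq_0_iff_dvd mod_eq_dvd_iff[symmetric])
  finally have top: "zp_mult p (zp_diff p s s') z (Suc m) = 0 \<longleftrightarrow> a = a'" .
  have "zp_mult p s z m = a mod int p ^ m" "zp_mult p s' z m = a' mod int p ^ m"
    unfolding a_def a'_def using Zp_mod_power zp_mult_in_Zp assms(1-4) by (metis le_SucI order_refl)+
  then have "zp_mult p (zp_diff p s s') z m = (a mod int p ^ m - a' mod int p ^ m) mod int p ^ m"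
    by (simp add: zp_mult_zp_diff)
  then have "zp_mult p (zp_diff p s s') z m = 0 \<longleftrightarrow> a mod int p ^ m = a' mod int p ^ m"
    by (simp add: mod_diff_eq mod_eq_0_iff_dvd mod_eq_dvd_iff)
  with top show ?thesis by blast
qed

lemma qp_abs_scale_diff_eq_p_iff:
  assumes "p > 1" and "s \<in> Zp p" and "s' \<in> Zp p" and "z \<in> Zp p"
  shows "qp_abs p (qp_scale p (zp_diff p s s') (Suc m, z)) = real p \<longleftrightarrow>
         nat (zp_mult p s z (Suc m)) \<noteq> nat (zp_mult p s' z (Suc m)) \<and>
         nat (zp_mult p s z (Suc m)) mod p ^ m = nat (zp_mult p s' z (Suc m)) mod p ^ m"
proof -
  define d where "d = zp_mult p (zp_diff p s s') z"
  have "d \<in> Zp p" unfolding d_def using assms by (simp add: zp_mult_in_Zp zp_diff_in_Zp)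
  have nat_eq_iff: "nat (zp_mult p x z (Suc m)) = nat (zp_mult p x' z (Suc m)) \<longleftrightarrow>
      zp_mult p x z (Suc m) = zp_mult p x' z (Suc m)" for x x'
    using assms(1) by (intro eq_nat_nat_iff) (simp_all add: zp_mult_def)
  have nat_mod_eq_iff: "nat (zp_mult p x z (Suc m)) mod p ^ m = nat (zp_mult p x' z (Suc m)) mod p ^ m \<longleftrightarrow>
      zp_mult p x z (Suc m) mod int p ^ m = zp_mult p x' z (Suc m) mod int p ^ m" for x x'
  proof -
    have "int (nat (zp_mult p y z (Suc m)) mod p ^ m) = zp_mult p y z (Suc m) mod int p ^ m" for y
      unfolding zp_mult_def using assms(1) by (simp add: zmod_int)
    then show ?thesis by (metis of_nat_eq_iff)
  qed
  have "qp_abs p (qp_scale p (zp_diff p s s') (Suc m, z)) = real p \<longleftrightarrow> (\<exists>n. d n \<noteq> 0) \<and> zp_val p d = m"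
    unfolding qp_scale_def fst_conv snd_conv qp_abs_eq_p_iff[OF assms(1)] d_def by auto
  also have "\<dots> \<longleftrightarrow> d (Suc m) \<noteq> 0 \<and> d m = 0" by (rule zp_val_eq_iff[OF \<open>d \<in> Zp p\<close>])
  also have "\<dots> \<longleftrightarrow> zp_mult p s z (Suc m) \<noteq> zp_mult p s' z (Suc m) \<and>
                  zp_mult p s z (Suc m) mod int p ^ m = zp_mult p s' z (Suc m) mod int p ^ m"
    unfolding d_def using zp_mult_diff_levels_iff assms by (simp add: less_imp_le_nat)
  finally show ?thesis unfolding nat_eq_iff nat_mod_eq_iff .
qed

lemma fourier_muS_eq_cnj_sum:
  assumes "p > 0"
  shows "fourier_muS p S (k, z) = cnj (\<Sum>s\<in>S. unity_root (p ^ k) ^ nat (zp_mult p s z k))"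
  unfolding fourier_muS_def cnj_sum
proof (rule sum.cong[OF refl])
  fix s
  have "real_of_int (zp_mult p s z k) = real (nat (zp_mult p s z k))"
    unfolding zp_mult_def using assms by simp
  then have "qp_chi p (qp_scale p s (k, z))
      = exp (2 * of_real pi * \<i> * of_real (real (nat (zp_mult p s z k)) / real (p ^ k)))"
    unfolding qp_chi_def qp_frac_def qp_scale_def fst_conv snd_conv of_nat_power by (simp only:)
  then show "cnj (qp_chi p (qp_scale p s (k, z))) = cnj (unity_root (p ^ k) ^ nat (zp_mult p s z k))"
    by (simp only: exp_frac_eq_unity_root_power)
qed

theorem lemma2p4:
  fixes p :: nat and S :: "(nat \<Rightarrow> int) set" and xi :: "nat \<times> (nat \<Rightarrow> int)"
  assumes "prime p" and "S \<subseteq> Zp p" and "finite S" and "card S = p" and "xi \<in> Qp p"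
  shows "fourier_muS p S xi = 0 \<longleftrightarrow>
         (\<forall>s\<in>S. \<forall>s'\<in>S. s \<noteq> s' \<longrightarrow> qp_abs p (qp_scale p (zp_diff p s s') xi) = real p)"
proof -
  have "p > 1" "p > 0" using prime_gt_1_nat[OF assms(1)] by simp_all
  obtain k z where xi: "xi = (k, z)" and "z \<in> Zp p" using assms(5) unfolding Qp_def by auto
  define A where "A s = nat (zp_mult p s z k)" for s
  have fourier: "fourier_muS p S xi = 0 \<longleftrightarrow> (\<Sum>s\<in>S. unity_root (p ^ k) ^ A s) = 0"
    unfolding xi A_def fourier_muS_eq_cnj_sum[OF \<open>p > 0\<close>] by (rule complex_cnj_zero_iff)
  show ?thesis
  proof (cases k)
    case 0
    have "\<not> card S \<le> Suc 0" using assms(4) \<open>p > 1\<close> by simp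
    then obtain s s' where "s \<in> S" "s' \<in> S" "s \<noteq> s'"
      using card_le_Suc0_iff_eq[OF assms(3)] by blast
    moreover have "qp_abs p (qp_scale p d xi) \<noteq> real p" for d
      unfolding xi 0 qp_scale_def using qp_abs_eq_p_iff[OF \<open>p > 1\<close>] by simp
    moreover have "fourier_muS p S xi \<noteq> 0"
      unfolding fourier 0 power_0 unity_root_1 using assms(4) \<open>p > 1\<close> by simp
    ultimately show ?thesis by blast
  next
    case (Suc m)
    have "\<forall>s\<in>S. A s < p ^ Suc m"
      unfolding A_def Suc zp_mult_def using \<open>p > 1\<close> by (simp add: nat_less_iff)
    then have sum_iff: "fourier_muS p S xi = 0 \<longleftrightarrow>
        (\<forall>s\<in>S. \<forall>s'\<in>S. s \<noteq> s' \<longrightarrow> A s \<noteq> A s' \<and> A s mod p ^ m = A s' mod p ^ m)"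
      unfolding fourier Suc by (rule sum_unity_root_eq_0_iff[OF assms(1,3,4)])
    have "qp_abs p (qp_scale p (zp_diff p s s') xi) = real p \<longleftrightarrow> A s \<noteq> A s' \<and> A s mod p ^ m = A s' mod p ^ m"
      if "s \<in> S" and "s' \<in> S" for s s'
      unfolding xi Suc A_def using that assms(2) \<open>z \<in> Zp p\<close>
      by (intro qp_abs_scale_diff_eq_p_iff[OF \<open>p > 1\<close>]) auto
    then show ?thesis unfolding sum_iff by blast
  qed
qed

end
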